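(* Let $K$ be a field, let $\Lambda$ be the Grassmann algebra over $K$ on odd generators $x_0,x_1,x_2,\dots$, identify $x_i$ with the odd operator of left multiplication by $x_i$ on $\Lambda$, and let $\partial_i$ be the odd superderivation of $\Lambda$ with $\partial_i(x_j)=\delta_{ij}$. For $i\ge 0$ let $$v_i=\sum_{k\ge 0}\Big(\prod_{n=0}^{k-1}x_{i+3n}x_{i+3n+1}\Big)\partial_{i+3k}=\partial_i+x_ix_{i+1}\big(\partial_{i+3}+x_{i+3}x_{i+4}(\partial_{i+6}+\cdots)\big).$$ Then, for all $i,k\ge 0$, with $[a,b]=ab-(-1)^{|a||b|}ba$ the supercommutator in $\operatorname{End}\Lambda$, $$[v_i,v_{i+3k}]=2\Big(\prod_{n=0}^{k-1}x_{i+3n}x_{i+3n+1}\Big)x_{i+3k+1}v_{i+3k+3},$$ $$[v_i,v_{i+3k+1}]=-\Big(\prod_{n=0}^{k-1}x_{i+3n}x_{i+3n+1}\Big)x_{i+3k}v_{i+3k+3},$$ $$[v_i,v_{i+3k+2}]=-\Big(\prod_{n=0}^{k}x_{i+3n}x_{i+3n+1}\Big)x_{i+3k+2}v_{i+3k+5}.$$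
   Context: The $v_i$ are odd superderivations of $\Lambda$ given by formal infinite sums; applied to any element of $\Lambda$ only finitely many terms act nontrivially, so they are well-defined elements of $\operatorname{End}\Lambda$. All products of operators are compositions in $\operatorname{End}\Lambda$; $x_i,\partial_i$ are odd, with $\partial_ix_j+x_j\partial_i=\delta_{ij}$, $x_i^2=\partial_i^2=0$, and other pairs anticommuting. *)

theory Defs
  imports Main
begin

text \<open>Grassmann algebra over a field on odd generators x_0, x_1, ...:
  an element is a finitely supported coefficient function on finite sets of
  indices; the set S stands for the monomial x_{s1} x_{s2} ... x_{sm} with
  s1 < s2 < ... < sm.\<close>

definition grass :: "(nat set \<Rightarrow> 'a::field) set" where
  "grass = {f. finite {S. f S \<noteq> 0} \<and> (\<forall>S. f S \<noteq> 0 \<longrightarrow> finite S)}"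

text \<open>Sign of reordering the monomial of A followed by the monomial of B.\<close>
definition gsign :: "nat set \<Rightarrow> nat set \<Rightarrow> 'a::field" where
  "gsign A B = (-1) ^ card {(a, b). a \<in> A \<and> b \<in> B \<and> b < a}"

definition gmult :: "(nat set \<Rightarrow> 'a::field) \<Rightarrow> (nat set \<Rightarrow> 'a) \<Rightarrow> nat set \<Rightarrow> 'a" where
  "gmult f g = (\<lambda>S. \<Sum>A\<in>Pow S. gsign A (S - A) * f A * g (S - A))"

definition gen :: "nat \<Rightarrow> nat set \<Rightarrow> 'a::field" where
  "gen j = (\<lambda>S. if S = {j} then 1 else 0)"

definition xop :: "nat \<Rightarrow> (nat set \<Rightarrow> 'a::field) \<Rightarrow> nat set \<Rightarrow> 'a" where
  "xop j f = gmult (gen j) f"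

text \<open>The odd superderivation d_j with d_j(x_i) = delta_ij, written out on
  monomials: d_j (x_T) = (-1)^(number of t in T below j) x_(T - {j}) if j in T,
  and 0 otherwise.\<close>
definition dop :: "nat \<Rightarrow> (nat set \<Rightarrow> 'a::field) \<Rightarrow> nat set \<Rightarrow> 'a" where
  "dop j f = (\<lambda>S. if j \<in> S then 0
                   else (-1) ^ card {t \<in> S. t < j} * f (insert j S))"

fun pprod :: "nat \<Rightarrow> nat \<Rightarrow> (nat set \<Rightarrow> 'a::field) \<Rightarrow> nat set \<Rightarrow> 'a" where
  "pprod i 0 = id"
| "pprod i (Suc k) = pprod i k \<circ> xop (i + 3 * k) \<circ> xop (i + 3 * k + 1)"

definition vars :: "(nat set \<Rightarrow> 'a::zero) \<Rightarrow> nat set" where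
  "vars f = \<Union>{S. f S \<noteq> 0}"

text \<open>v_i = sum_{k>=0} (prod_{n<k} x_{i+3n} x_{i+3n+1}) d_{i+3k}; applied to f only
  the terms with i+3k among the variables of f can be nonzero (d_j f = 0 otherwise),
  so the formal infinite sum is the finite sum over those k.\<close>
definition vop :: "nat \<Rightarrow> (nat set \<Rightarrow> 'a::field) \<Rightarrow> nat set \<Rightarrow> 'a" where
  "vop i f = (\<lambda>S. \<Sum>k\<in>{k. i + 3 * k \<in> vars f}. pprod i k (dop (i + 3 * k) f) S)"

definition scomm :: "nat \<Rightarrow> nat \<Rightarrow> ((nat set \<Rightarrow> 'a::field) \<Rightarrow> nat set \<Rightarrow> 'a)
     \<Rightarrow> ((nat set \<Rightarrow> 'a) \<Rightarrow> nat set \<Rightarrow> 'a) \<Rightarrow> (nat set \<Rightarrow> 'a) \<Rightarrow> nat set \<Rightarrow> 'a" where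
  "scomm pa pb A B = (\<lambda>f S. A (B f) S - (-1) ^ (pa * pb) * B (A f) S)"

end

theory Submission imports Defs "HOL-Library.Function_Algebras" begin

text \<open>On the Grassmann algebra the operators x_j and d_j satisfy the canonical
  anticommutation relations. Applied to an element whose variables all lie below T,
  v_i agrees with its truncation W_i to the terms with index i + 3k < T, and these
  truncations satisfy W_i = d_i + x_i x_{i+1} W_{i+3}, with W_j anticommuting with x_l
  and d_l for l < j. Hence for j \<ge> i + 3 the anticommutator [W_i, W_j] equals
  x_i x_{i+1} [W_{i+3}, W_j], and iterating reduces the three identities to
  [W_j, W_j], [W_j, W_{j+1}] and [W_j, W_{j+2}], which the anticommutation relations
  evaluate directly.\<close>

definition sign_below :: "nat set \<Rightarrow> nat \<Rightarrow> 'a::field" where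
  "sign_below S j = (-1) ^ card {t \<in> S. t < j}"

text \<open>It agrees with xop only on
  functions vanishing on infinite index sets, since on an infinite S the Grassmann
  product is a sum over the infinite set Pow S and hence 0.\<close>
definition xmul :: "nat \<Rightarrow> (nat set \<Rightarrow> 'a::field) \<Rightarrow> nat set \<Rightarrow> 'a" where
  "xmul j g = (\<lambda>S. if j \<in> S then sign_below S j * g (S - {j}) else 0)"

lemma dop_sign_below: "dop j g = (\<lambda>S. if j \<in> S then 0 else sign_below S j * g (insert j S))"
  unfolding dop_def sign_below_def ..

lemma sign_below_insert:
  "sign_below (insert a S) b = (if a < b \<and> a \<notin> S then - sign_below S b else (sign_below S b :: 'a::field))"
proof (cases "a < b \<and> a \<notin> S")
  case True
  then have "{t \<in> insert a S. t < b} = insert a {t \<in> S. t < b}" by auto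
  then show ?thesis using True by (simp add: sign_below_def)
next
  case False
  then have "{t \<in> insert a S. t < b} = {t \<in> S. t < b}" by auto
  then have "sign_below (insert a S) b = (sign_below S b :: 'a)" by (simp add: sign_below_def)
  with False show ?thesis by argo
qed

lemma sign_below_remove:
  "sign_below (S - {a}) b = (if a < b \<and> a \<in> S then - sign_below S b else (sign_below S b :: 'a::field))"
proof (cases "a < b \<and> a \<in> S")
  case True
  then have "sign_below S b = - (sign_below (S - {a}) b :: 'a)"
    using sign_below_insert[of a "S - {a}" b] by (simp add: insert_absorb)
  then show ?thesis using True by simp
next
  case False
  then have "{t \<in> S - {a}. t < b} = {t \<in> S. t < b}" by auto
  then have "sign_below (S - {a}) b = (sign_below S b :: 'a)" by (simp add: sign_below_def)
  with False show ?thesis by argo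
qed

lemma sign_below_square: "sign_below S j * sign_below S j = (1::'a::field)"
  by (simp add: sign_below_def power_mult_distrib[symmetric])

lemma xmul_add [simp]: "xmul j (g + h) = xmul j g + xmul j h"
  by (auto simp: fun_eq_iff xmul_def algebra_simps)

lemma xmul_minus [simp]: "xmul j (- g) = - xmul j g"
  by (auto simp: fun_eq_iff xmul_def)

lemma xmul_diff [simp]: "xmul j (g - h) = xmul j g - xmul j h"
  by (auto simp: fun_eq_iff xmul_def algebra_simps)

lemma xmul_zero [simp]: "xmul j 0 = 0"
  by (simp add: fun_eq_iff xmul_def)

lemma dop_add [simp]: "dop j (g + h) = dop j g + dop j h"
  by (auto simp: fun_eq_iff dop_def algebra_simps)

lemma dop_minus [simp]: "dop j (- g) = - dop j g"
  by (auto simp: fun_eq_iff dop_def)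

lemma dop_diff [simp]: "dop j (g - h) = dop j g - dop j h"
  by (auto simp: fun_eq_iff dop_def algebra_simps)

lemma dop_zero [simp]: "dop j 0 = 0"
  by (simp add: fun_eq_iff dop_def)

lemma xmul_sum: "xmul j (\<lambda>S. \<Sum>k\<in>K. h k S) = (\<lambda>S. \<Sum>k\<in>K. xmul j (h k) S)"
  by (auto simp: fun_eq_iff xmul_def sum_distrib_left)

subsection \<open>Canonical anticommutation relations\<close>

lemma xmul_xmul_same [simp]: "xmul a (xmul a g) = 0"
  by (auto simp: fun_eq_iff xmul_def)

lemma dop_dop_same [simp]: "dop a (dop a g) = 0"
  by (auto simp: fun_eq_iff dop_def)

lemma xmul_anticomm: "b < a \<Longrightarrow> xmul a (xmul b g) = - xmul b (xmul a g)"
  by (auto simp: fun_eq_iff xmul_def sign_below_remove Diff_insert2[symmetric] insert_commute)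

lemma dop_anticomm: "b < a \<Longrightarrow> dop a (dop b g) = - dop b (dop a g)"
  by (auto simp: fun_eq_iff dop_sign_below sign_below_insert insert_commute)

lemma dop_xmul_anticomm: "a \<noteq> b \<Longrightarrow> dop a (xmul b g) = - xmul b (dop a g)"
  by (auto simp: fun_eq_iff dop_sign_below xmul_def sign_below_insert sign_below_remove insert_Diff_if)

lemma dop_xmul_same: "dop a (xmul a g) = g - xmul a (dop a g)"
  by (auto simp: fun_eq_iff dop_sign_below xmul_def sign_below_insert sign_below_remove
      insert_absorb sign_below_square)

subsection \<open>Truncations of v_i\<close>

fun xpairs :: "nat \<Rightarrow> nat \<Rightarrow> (nat set \<Rightarrow> 'a::field) \<Rightarrow> nat set \<Rightarrow> 'a" where
  "xpairs i 0 = id"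
| "xpairs i (Suc k) = xpairs i k \<circ> xmul (i + 3 * k) \<circ> xmul (i + 3 * k + 1)"

lemma xpairs_add [simp]: "xpairs i k (g + h) = xpairs i k g + xpairs i k h"
  by (induction k arbitrary: g h) auto

lemma xpairs_minus [simp]: "xpairs i k (- g) = - xpairs i k g"
  by (induction k arbitrary: g) auto

lemma xpairs_diff [simp]: "xpairs i k (g - h) = xpairs i k g - xpairs i k h"
  by (induction k arbitrary: g h) auto

lemma xpairs_zero [simp]: "xpairs i k 0 = 0"
  by (induction k) (simp_all only: xpairs.simps comp_apply id_apply xmul_zero)

lemma xpairs_Suc_left: "xpairs i (Suc k) g = xmul i (xmul (i + 1) (xpairs (i + 3) k g))"
proof (induction k arbitrary: g)
  case (Suc k)
  have "xpairs i (Suc (Suc k)) g = xpairs i (Suc k) (xmul (i + 3 * Suc k) (xmul (i + 3 * Suc k + 1) g))"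
    by simp
  also have "\<dots> = xmul i (xmul (i + 1) (xpairs (i + 3) (Suc k) g))"
    by (simp only: Suc) (simp add: algebra_simps)
  finally show ?case .
qed simp

definition vtrunc :: "nat \<Rightarrow> nat \<Rightarrow> (nat set \<Rightarrow> 'a::field) \<Rightarrow> nat set \<Rightarrow> 'a" where
  "vtrunc T i g = (\<lambda>S. \<Sum>k\<in>{k. i + 3 * k < T}. xpairs i k (dop (i + 3 * k) g) S)"

lemma finite_index_below: "finite {k. i + 3 * k < (T::nat)}"
  by (rule finite_subset[of _ "{..<T}"]) auto

lemma vtrunc_add [simp]: "vtrunc T i (g + h) = vtrunc T i g + vtrunc T i h"
  by (simp add: vtrunc_def fun_eq_iff sum.distrib)

lemma vtrunc_minus [simp]: "vtrunc T i (- g) = - vtrunc T i g"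
  by (simp add: vtrunc_def fun_eq_iff sum_negf)

lemma vtrunc_diff [simp]: "vtrunc T i (g - h) = vtrunc T i g - vtrunc T i h"
  by (simp add: vtrunc_def fun_eq_iff sum_subtractf)

lemma vtrunc_beyond: "T \<le> i \<Longrightarrow> vtrunc T i g = 0"
  by (simp add: vtrunc_def fun_eq_iff)

lemma vtrunc_unfold:
  assumes "i < T"
  shows "vtrunc T i g = dop i g + xmul i (xmul (i + 1) (vtrunc T (i + 3) g))"
proof -
  have indices: "{k. i + 3 * k < T} = insert 0 (Suc ` {k. i + 3 + 3 * k < T})"
  proof (intro set_eqI iffI)
    fix k assume "k \<in> {k. i + 3 * k < T}"
    then show "k \<in> insert 0 (Suc ` {k. i + 3 + 3 * k < T})"
      by (cases k) auto
  qed (use assms in auto)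
  have "vtrunc T i g = (\<lambda>S. dop i g S
          + (\<Sum>k\<in>{k. i + 3 + 3 * k < T}. xpairs i (Suc k) (dop (i + 3 * Suc k) g) S))"
    unfolding vtrunc_def indices using finite_index_below by (simp add: sum.reindex)
  also have "\<dots> = dop i g + xmul i (xmul (i + 1) (vtrunc T (i + 3) g))"
    unfolding vtrunc_def xmul_sum xpairs_Suc_left by (simp add: algebra_simps fun_eq_iff)
  finally show ?thesis .
qed

lemma vtrunc_anticomm:
  assumes "l < j"
  shows "vtrunc T j (xmul l g) = - xmul l (vtrunc T j g) \<and> vtrunc T j (dop l g) = - dop l (vtrunc T j g)"
  using assms
proof (induction "T - j" arbitrary: j g rule: less_induct)
  case less
  show ?case
  proof (cases "j < T")
    case True
    have "vtrunc T (j + 3) (xmul l h) = - xmul l (vtrunc T (j + 3) h)"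
         "vtrunc T (j + 3) (dop l h) = - dop l (vtrunc T (j + 3) h)" for h :: "nat set \<Rightarrow> 'a"
      using less True by auto
    with less.prems True show ?thesis
      by (simp add: vtrunc_unfold[of j T] dop_xmul_anticomm xmul_anticomm dop_anticomm)
  qed (simp add: vtrunc_beyond)
qed

lemma vtrunc_xmul_anticomm: "l < j \<Longrightarrow> vtrunc T j (xmul l g) = - xmul l (vtrunc T j g)"
  using vtrunc_anticomm by blast

lemma vtrunc_dop_anticomm: "l < j \<Longrightarrow> vtrunc T j (dop l g) = - dop l (vtrunc T j g)"
  using vtrunc_anticomm by blast

lemmas anticomm_rules = vtrunc_xmul_anticomm vtrunc_dop_anticomm
  dop_xmul_anticomm dop_xmul_same xmul_anticomm dop_anticomm

definition vanticomm :: "nat \<Rightarrow> nat \<Rightarrow> nat \<Rightarrow> (nat set \<Rightarrow> 'a::field) \<Rightarrow> nat set \<Rightarrow> 'a" where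
  "vanticomm T a b g = vtrunc T a (vtrunc T b g) + vtrunc T b (vtrunc T a g)"

lemma vtrunc_square: "vtrunc T i (vtrunc T i g) = xmul (i + 1) (vtrunc T (i + 3) g)"
proof (cases "i < T")
  case True
  then show ?thesis by (simp add: vtrunc_unfold[OF True] anticomm_rules)
qed (simp add: vtrunc_beyond)

lemma vanticomm_same: "vanticomm T i i g = 2 * xmul (i + 1) (vtrunc T (i + 3) g)"
  unfolding vanticomm_def vtrunc_square by (rule mult_2[symmetric])

lemma vtrunc_if: "vtrunc T j g = (if j < T then dop j g + xmul j (xmul (j + 1) (vtrunc T (j + 3) g)) else 0)"
  using vtrunc_unfold[of j T g] vtrunc_beyond[of T j g] by auto

lemma vanticomm_Suc: "vanticomm T i (i + 1) g = - xmul i (vtrunc T (i + 3) g)"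
  by (simp add: vanticomm_def vtrunc_if[of T i] vtrunc_if[of T "Suc i"] vtrunc_beyond anticomm_rules)

lemma vanticomm_Suc_Suc:
  "vanticomm T i (i + 2) g = - xmul i (xmul (i + 1) (xmul (i + 2) (vtrunc T (i + 5) g)))"
  by (simp add: vanticomm_def vtrunc_if[of T i] vtrunc_if[of T "Suc (Suc i)"]
      vtrunc_if[of T "Suc (Suc (Suc i))"] vtrunc_beyond anticomm_rules numeral_eq_Suc)

lemma vanticomm_shift3:
  "i + 3 \<le> j \<Longrightarrow> vanticomm T i j g = xmul i (xmul (i + 1) (vanticomm T (i + 3) j g))"
  by (simp add: vanticomm_def vtrunc_if[of T i] vtrunc_beyond anticomm_rules)

lemma vanticomm_shift: "vanticomm T i (i + 3 * k + r) g = xpairs i k (vanticomm T (i + 3 * k) (i + 3 * k + r) g)"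
proof (induction k arbitrary: r)
  case (Suc k)
  have "vanticomm T i (i + 3 * Suc k + r) g
      = xpairs i k (vanticomm T (i + 3 * k) (i + 3 * k + (r + 3)) g)"
    using Suc[of "r + 3"] by (simp add: algebra_simps)
  also have "\<dots> = xpairs i (Suc k) (vanticomm T (i + 3 * Suc k) (i + 3 * Suc k + r) g)"
    by (subst vanticomm_shift3) (simp_all add: algebra_simps)
  finally show ?case .
qed simp

lemma vanticomm_shift_same:
  "vanticomm T i (i + 3 * k) g = 2 * xpairs i k (xmul (i + 3 * k + 1) (vtrunc T (i + 3 * k + 3) g))"
proof -
  have "vanticomm T i (i + 3 * k) g = xpairs i k (vanticomm T (i + 3 * k) (i + 3 * k) g)"
    using vanticomm_shift[of T i k 0 g] by (simp only: add_0_right)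
  then show ?thesis
    unfolding vanticomm_same mult_2 xpairs_add .
qed

lemma vanticomm_shift_Suc:
  "vanticomm T i (i + 3 * k + 1) g = - xpairs i k (xmul (i + 3 * k) (vtrunc T (i + 3 * k + 3) g))"
  unfolding vanticomm_shift[of T i k 1 g] vanticomm_Suc xpairs_minus ..

lemma vanticomm_shift_Suc_Suc:
  "vanticomm T i (i + 3 * k + 2) g
    = - xpairs i (Suc k) (xmul (i + 3 * k + 2) (vtrunc T (i + 3 * k + 5) g))"
proof -
  have "vanticomm T i (i + 3 * k + 2) g = xpairs i k (vanticomm T (i + 3 * k) (i + 3 * k + 2) g)"
    by (rule vanticomm_shift)
  also have "\<dots> = - xpairs i k (xmul (i + 3 * k) (xmul (i + 3 * k + 1) (xmul (i + 3 * k + 2) (vtrunc T (i + 3 * k + 5) g))))"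
    unfolding vanticomm_Suc_Suc xpairs_minus ..
  finally show ?thesis by simp
qed

subsection \<open>Comparison with the operators on the Grassmann algebra\<close>

definition supp_below :: "nat \<Rightarrow> (nat set \<Rightarrow> 'a::zero) \<Rightarrow> bool" where
  "supp_below T h \<longleftrightarrow> (\<forall>S. h S \<noteq> 0 \<longrightarrow> S \<subseteq> {..<T})"

definition vanishes_on_infinite :: "(nat set \<Rightarrow> 'a::zero) \<Rightarrow> bool" where
  "vanishes_on_infinite h \<longleftrightarrow> (\<forall>S. infinite S \<longrightarrow> h S = 0)"

lemma grass_supp_below: "f \<in> grass \<Longrightarrow> \<exists>T. supp_below T f"
proof -
  assume "f \<in> grass"
  then have "finite (vars f)" by (auto simp: grass_def vars_def)
  then obtain T where "\<forall>n \<in> vars f. n < T"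
    using finite_nat_set_iff_bounded by blast
  then have "supp_below T f" unfolding supp_below_def vars_def by auto
  then show ?thesis ..
qed

lemma supp_below_vanishes_on_infinite: "supp_below T h \<Longrightarrow> vanishes_on_infinite h"
  unfolding supp_below_def vanishes_on_infinite_def using finite_subset by blast

lemma vanishes_on_infinite_xmul: "vanishes_on_infinite h \<Longrightarrow> vanishes_on_infinite (xmul j h)"
  unfolding vanishes_on_infinite_def xmul_def by auto

lemma vanishes_on_infinite_dop: "vanishes_on_infinite h \<Longrightarrow> vanishes_on_infinite (dop j h)"
  unfolding vanishes_on_infinite_def dop_def by auto

lemma gsign_singleton: "gsign {j} (S - {j}) = (sign_below S j :: 'a::field)"
proof -
  have "{(a, b). a \<in> {j} \<and> b \<in> S - {j} \<and> b < a} = Pair j ` {t \<in> S. t < j}"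
    by auto
  moreover have "card (Pair j ` {t \<in> S. t < j}) = card {t \<in> S. t < j}"
    by (rule card_image) (simp add: inj_on_def)
  ultimately show ?thesis by (simp add: gsign_def sign_below_def)
qed

lemma xop_eq_xmul: "vanishes_on_infinite h \<Longrightarrow> xop j h = xmul j h"
proof
  fix S assume h: "vanishes_on_infinite h"
  show "xop j h S = xmul j h S"
  proof (cases "finite S")
    case True
    have "xop j h S = (\<Sum>A\<in>Pow S. if A = {j} then gsign {j} (S - {j}) * h (S - {j}) else 0)"
      unfolding xop_def gmult_def by (rule sum.cong) (auto simp: gen_def)
    also have "\<dots> = (if {j} \<in> Pow S then gsign {j} (S - {j}) * h (S - {j}) else 0)"
      using True by (subst sum.delta) auto
    also have "\<dots> = xmul j h S"
      by (simp add: xmul_def gsign_singleton)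
    finally show ?thesis .
  next
    case False
    then show ?thesis using h by (simp add: xop_def gmult_def xmul_def vanishes_on_infinite_def)
  qed
qed

lemma pprod_eq_xpairs: "vanishes_on_infinite h \<Longrightarrow> pprod i k h = xpairs i k h"
  by (induction k arbitrary: h) (simp_all add: xop_eq_xmul vanishes_on_infinite_xmul)

lemma supp_below_dop: "supp_below T h \<Longrightarrow> supp_below T (dop j h)"
  unfolding supp_below_def dop_def by (auto split: if_splits)

lemma supp_below_xmul: "j < T \<Longrightarrow> supp_below T h \<Longrightarrow> supp_below T (xmul j h)"
  unfolding supp_below_def xmul_def by (force split: if_splits)

lemma supp_below_xpairs: "i + 3 * k \<le> T \<Longrightarrow> supp_below T h \<Longrightarrow> supp_below T (xpairs i k h)"
proof (induction k arbitrary: h)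
  case (Suc k)
  then have "supp_below T (xmul (i + 3 * k) (xmul (i + 3 * k + 1) h))"
    by (intro supp_below_xmul) auto
  with Suc show ?case by simp
qed simp

lemma supp_below_sum: "(\<And>k. k \<in> K \<Longrightarrow> supp_below T (h k)) \<Longrightarrow> supp_below T (\<lambda>S. \<Sum>k\<in>K. h k S)"
  unfolding supp_below_def by (metis (mono_tags, lifting) sum.neutral)

lemma supp_below_vtrunc: "supp_below T h \<Longrightarrow> supp_below T (vtrunc T i h)"
  unfolding vtrunc_def by (intro supp_below_sum supp_below_xpairs supp_below_dop) auto

text \<open>Terms of v_i with index at least T annihilate h, since d_j h = 0 when x_j
  does not occur in h.\<close>
lemma vop_eq_vtrunc: "supp_below T h \<Longrightarrow> vop i h = vtrunc T i h"
proof -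
  assume h: "supp_below T h"
  have vars: "{k. i + 3 * k \<in> vars h} \<subseteq> {k. i + 3 * k < T}"
    using h unfolding supp_below_def vars_def by auto
  have dop_vanishes: "dop (i + 3 * k) h = 0" if "i + 3 * k \<notin> vars h" for k
    using that unfolding vars_def dop_def by (auto simp: fun_eq_iff)
  have "vop i h = (\<lambda>S. \<Sum>k\<in>{k. i + 3 * k \<in> vars h}. xpairs i k (dop (i + 3 * k) h) S)"
    using supp_below_vanishes_on_infinite[OF h]
    by (simp add: vop_def pprod_eq_xpairs vanishes_on_infinite_dop)
  also have "\<dots> = vtrunc T i h"
    unfolding vtrunc_def
    by (rule ext, rule sum.mono_neutral_left[OF finite_index_below vars]) (auto simp: dop_vanishes)
  finally show ?thesis .
qed

theorem lemma4p2:
  fixes i k :: nat and f :: "nat set \<Rightarrow> 'a::field"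
  assumes "f \<in> grass"
  shows "(scomm 1 1 (vop i) (vop (i + 3 * k)) f
           = (\<lambda>S. 2 * (pprod i k \<circ> xop (i + 3 * k + 1) \<circ> vop (i + 3 * k + 3)) f S)) \<and>
         (scomm 1 1 (vop i) (vop (i + 3 * k + 1)) f
           = (\<lambda>S. - (pprod i k \<circ> xop (i + 3 * k) \<circ> vop (i + 3 * k + 3)) f S)) \<and>
         (scomm 1 1 (vop i) (vop (i + 3 * k + 2)) f
           = (\<lambda>S. - (pprod i (Suc k) \<circ> xop (i + 3 * k + 2) \<circ> vop (i + 3 * k + 5)) f S))"
proof -
  obtain T where f: "supp_below T f" using grass_supp_below assms by blast
  have vop: "vop j f = vtrunc T j f" for j
    using vop_eq_vtrunc[OF f] .
  have "vanishes_on_infinite (vtrunc T j f)" for j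
    using f by (intro supp_below_vanishes_on_infinite[of T] supp_below_vtrunc)
  then have rhs: "(pprod i m \<circ> xop a \<circ> vop c) f = xpairs i m (xmul a (vtrunc T c f))" for m a c
    by (simp add: vop xop_eq_xmul pprod_eq_xpairs vanishes_on_infinite_xmul)
  have lhs: "scomm 1 1 (vop a) (vop j) f = vanticomm T a j f" for a j
    using vop vop_eq_vtrunc[OF supp_below_vtrunc[OF f]]
    by (simp add: scomm_def vanticomm_def plus_fun_def)
  show ?thesis
    unfolding lhs rhs vanticomm_shift_same vanticomm_shift_Suc vanticomm_shift_Suc_Suc
    by (simp add: fun_eq_iff)
qed

end
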